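(* Let $g\in\mathcal{H}(\mathbb{D})$ and $n\in\mathbb{N}$. Then every $L\in\mathscr{A}_g^{(n)}$ admits an $ST$-decomposition, i.e. there exist constants $c_{j,k}\in\mathbb{C}$ and a polynomial $P$ of degree less than $n$ such that \[ L=\sum_{k=1}^n\sum_{j=0}^k c_{j,k}S_g^jT_g^{k-j}+g(0)P(g-g(0))\,\delta_0 . \]
   Context: $\mathcal{H}(\mathbb{D})$ is the space of analytic functions on the unit disc. For $g\in\mathcal{H}(\mathbb{D})$, operators on $\mathcal{H}(\mathbb{D})$: $M_gf=fg$, $T_gf(z)=\int_0^zf(\zeta)g'(\zeta)\,d\zeta$, $S_gf(z)=\int_0^zf'(\zeta)g(\zeta)\,d\zeta$, $\delta_0f=f(0)$; $h\,\delta_0$ denotes $f\mapsto f(0)h$; $S_g^0,T_g^0$ are the identity. A $g$-word with $m$ letters is a composition $L_1\cdots L_m$ with each $L_i\in\{M_g,S_g,T_g\}$; $\mathscr{A}_g^{(n)}$ is the linear span of $g$-words with at least one and at most $n$ letters. The zero polynomial is allowed. *)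

theory Defs
  imports "HOL-Complex_Analysis.Complex_Analysis" "HOL-Computational_Algebra.Polynomial"
begin

text \<open>Operators on analytic functions on the unit disc; functions are represented
  as complex functions, only their values on ball 0 1 matter.\<close>

definition Mop :: "(complex \<Rightarrow> complex) \<Rightarrow> (complex \<Rightarrow> complex) \<Rightarrow> (complex \<Rightarrow> complex)" where
  "Mop g f = (\<lambda>z. f z * g z)"

definition Top :: "(complex \<Rightarrow> complex) \<Rightarrow> (complex \<Rightarrow> complex) \<Rightarrow> (complex \<Rightarrow> complex)" where
  "Top g f = (\<lambda>z. contour_integral (linepath 0 z) (\<lambda>\<zeta>. f \<zeta> * deriv g \<zeta>))"

definition Sop :: "(complex \<Rightarrow> complex) \<Rightarrow> (complex \<Rightarrow> complex) \<Rightarrow> (complex \<Rightarrow> complex)" where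
  "Sop g f = (\<lambda>z. contour_integral (linepath 0 z) (\<lambda>\<zeta>. deriv f \<zeta> * g \<zeta>))"

datatype letter = LM | LS | LT

fun letter_op :: "(complex \<Rightarrow> complex) \<Rightarrow> letter \<Rightarrow> (complex \<Rightarrow> complex) \<Rightarrow> (complex \<Rightarrow> complex)" where
  "letter_op g LM = Mop g"
| "letter_op g LS = Sop g"
| "letter_op g LT = Top g"

fun word_op :: "(complex \<Rightarrow> complex) \<Rightarrow> letter list \<Rightarrow> (complex \<Rightarrow> complex) \<Rightarrow> (complex \<Rightarrow> complex)" where
  "word_op g [] = id"
| "word_op g (l # w) = letter_op g l \<circ> word_op g w"

definition words_upto :: "nat \<Rightarrow> letter list set" where
  "words_upto n = {w. 1 \<le> length w \<and> length w \<le> n}"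

text \<open>A general element of the linear span A_g^(n), given by coefficients a on the words.\<close>
definition span_op :: "(complex \<Rightarrow> complex) \<Rightarrow> nat \<Rightarrow> (letter list \<Rightarrow> complex)
    \<Rightarrow> (complex \<Rightarrow> complex) \<Rightarrow> (complex \<Rightarrow> complex)" where
  "span_op g n a f = (\<lambda>z. \<Sum>w\<in>words_upto n. a w * word_op g w f z)"

end

theory Submission
  imports Defs
begin

text \<open>Two identities drive the proof: the product rule gives
  \<open>M\<^sub>g = S\<^sub>g + T\<^sub>g + g(0) \<delta>\<^sub>0\<close>, and comparing derivatives gives
  \<open>T\<^sub>g S\<^sub>g = S\<^sub>g T\<^sub>g - T\<^sub>g\<^sup>2 - g(0) (g - g(0)) \<delta>\<^sub>0\<close>.
  Call an operator homogeneous of degree \<open>m\<close> if it equals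
  \<open>\<Sum>\<^bsub>j \<le> m\<^esub> c\<^sub>j S\<^sub>g\<^sup>j T\<^sub>g\<^bsup>m - j\<^esup> + g(0) P(g - g(0)) \<delta>\<^sub>0\<close> with \<open>deg P < m\<close>.
  Composing on the left with \<open>S\<^sub>g\<close> preserves this form and raises the degree by one, because
  on polynomials in \<open>g - g(0)\<close> we have \<open>S\<^sub>g = M\<^sub>g - T\<^sub>g - g(0) \<delta>\<^sub>0\<close> and \<open>T\<^sub>g\<close> integrates
  \<open>(g - g(0))\<^sup>r\<close> explicitly. For \<open>T\<^sub>g\<close> it suffices to treat \<open>T\<^sub>g S\<^sub>g\<^sup>j T\<^sub>g\<^sup>i\<close>, which follows
  from the commutation rule by induction on \<open>j\<close>; \<open>M\<^sub>g\<close> then reduces to \<open>S\<^sub>g\<close> and \<open>T\<^sub>g\<close>.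
  Hence every word with \<open>m\<close> letters is homogeneous of degree \<open>m\<close>, and every element of
  \<open>\<A>\<^sub>g\<^bsup>(n)\<^esup>\<close> is a linear combination of such operators.\<close>

section \<open>Primitives on convex sets\<close>

lemma contour_integral_linepath_has_field_derivative:
  fixes f :: "complex \<Rightarrow> complex"
  assumes f: "f holomorphic_on S" and S: "open S" "convex S" "a \<in> S" and x: "x \<in> S"
  shows "((\<lambda>x. contour_integral (linepath a x) f) has_field_derivative f x) (at x)"
proof -
  have "((\<lambda>x. contour_integral (linepath a x) f) has_field_derivative f x) (at x within S)"
  proof (rule triangle_contour_integrals_convex_primitive)
    fix b c assume "b \<in> S" "c \<in> S"
    then have "convex hull {a, b, c} \<subseteq> S"
      using S by (intro hull_minimal) auto
    then have "(f has_contour_integral 0) (linepath a b +++ linepath b c +++ linepath c a)"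
      by (intro Cauchy_theorem_triangle holomorphic_on_subset[OF f])
    then show "contour_integral (linepath a b) f + contour_integral (linepath b c) f +
               contour_integral (linepath c a) f = 0"
      by (rule has_chain_integral_chain_integral3)
  qed (use f S x holomorphic_on_imp_continuous_on in blast)+
  then show ?thesis
    using at_within_open[OF x \<open>open S\<close>] by simp
qed

lemma eq_on_convex_if_same_derivative:
  fixes p q :: "'a :: real_normed_field \<Rightarrow> 'a"
  assumes "\<And>z. z \<in> S \<Longrightarrow> (p has_field_derivative d z) (at z)"
    and "\<And>z. z \<in> S \<Longrightarrow> (q has_field_derivative d z) (at z)"
    and "convex S" "a \<in> S" "p a = q a" "x \<in> S"
  shows "p x = q x"
proof -
  have "\<exists>c. \<forall>z\<in>S. p z - q z = c"
  proof (rule has_field_derivative_zero_constant[OF \<open>convex S\<close>])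
    fix z assume "z \<in> S"
    then have "((\<lambda>z. p z - q z) has_field_derivative d z - d z) (at z)"
      using assms by (intro derivative_intros) auto
    then show "((\<lambda>z. p z - q z) has_field_derivative 0) (at z within S)"
      by (simp add: has_field_derivative_at_within)
  qed
  then show ?thesis
    using assms(4-6) by (metis eq_iff_diff_eq_0)
qed

lemma contour_integral_linear_combination:
  assumes "finite A" "\<And>i. i \<in> A \<Longrightarrow> f i contour_integrable_on \<gamma>"
  shows "contour_integral \<gamma> (\<lambda>w. \<Sum>i\<in>A. k i * f i w) = (\<Sum>i\<in>A. k i * contour_integral \<gamma> (f i))"
  using assms by (simp add: contour_integral_sum contour_integrable_lmul contour_integral_lmul)

lemma closed_segment_0_subset_ball:
  "x \<in> ball 0 r \<Longrightarrow> closed_segment 0 x \<subseteq> ball (0 :: 'a :: real_normed_vector) r"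
  by (rule closed_segment_subset) (auto intro: le_less_trans[OF norm_ge_zero])

section \<open>The operators \<open>S\<^sub>g\<close> and \<open>T\<^sub>g\<close> on the disc\<close>

lemma Top_at_0 [simp]: "Top g u 0 = 0"
  by (simp add: Top_def)

lemma Sop_at_0 [simp]: "Sop g u 0 = 0"
  by (simp add: Sop_def)

lemma Sop_Top_iterate_at_0: "(Sop g ^^ j) ((Top g ^^ i) u) 0 = (if j = 0 \<and> i = 0 then u 0 else 0)"
  by (cases j; cases i) auto

lemma Top_cong:
  assumes "\<And>w. w \<in> ball 0 1 \<Longrightarrow> u w = v w" and "z \<in> ball 0 1"
  shows "Top g u z = Top g v z"
  unfolding Top_def using assms closed_segment_0_subset_ball[OF assms(2)]
  by (intro contour_integral_eq) auto

lemma Sop_cong: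
  assumes "\<And>w. w \<in> ball 0 1 \<Longrightarrow> u w = v w" and "z \<in> ball 0 1"
  shows "Sop g u z = Sop g v z"
  unfolding Sop_def
proof (rule contour_integral_eq)
  fix w assume "w \<in> path_image (linepath 0 z)"
  then have "w \<in> ball 0 1"
    using closed_segment_0_subset_ball[OF assms(2)] by auto
  then have "eventually (\<lambda>w. w \<in> ball 0 1) (nhds w)"
    by (intro eventually_nhds_in_open) auto
  then have "eventually (\<lambda>w. u w = v w) (nhds w)"
    using assms(1) by (auto elim: eventually_mono)
  then have "deriv u w = deriv v w"
    by (rule deriv_cong_ev) simp
  then show "deriv u w * g w = deriv v w * g w"
    by simp
qed

locale disc_symbol =
  fixes g :: "complex \<Rightarrow> complex"
  assumes holomorphic_g: "g holomorphic_on ball 0 1"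
begin

lemma has_field_derivative_Top:
  assumes "u holomorphic_on ball 0 1" "z \<in> ball 0 1"
  shows "(Top g u has_field_derivative u z * deriv g z) (at z)"
  unfolding Top_def using assms holomorphic_g
  by (intro contour_integral_linepath_has_field_derivative[of _ "ball 0 1"])
     (auto intro!: holomorphic_intros holomorphic_deriv)

lemma has_field_derivative_Sop:
  assumes "u holomorphic_on ball 0 1" "z \<in> ball 0 1"
  shows "(Sop g u has_field_derivative deriv u z * g z) (at z)"
  unfolding Sop_def using assms holomorphic_g
  by (intro contour_integral_linepath_has_field_derivative[of _ "ball 0 1"])
     (auto intro!: holomorphic_intros holomorphic_deriv)

lemma holomorphic_Top:
  assumes "u holomorphic_on ball 0 1"
  shows "Top g u holomorphic_on ball 0 1"
  unfolding holomorphic_on_open[OF open_ball] using has_field_derivative_Top[OF assms] by blast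

lemma holomorphic_Sop:
  assumes "u holomorphic_on ball 0 1"
  shows "Sop g u holomorphic_on ball 0 1"
  unfolding holomorphic_on_open[OF open_ball] using has_field_derivative_Sop[OF assms] by blast

lemma holomorphic_Sop_Top_iterate:
  assumes "u holomorphic_on ball 0 1"
  shows "(Sop g ^^ j) ((Top g ^^ i) u) holomorphic_on ball 0 1"
proof -
  have "(Top g ^^ i) u holomorphic_on ball 0 1"
    by (induction i) (simp_all add: assms holomorphic_Top)
  then show ?thesis
    by (induction j) (simp_all add: holomorphic_Sop)
qed

lemma contour_integrable_Top_Sop_integrands:
  assumes "u holomorphic_on ball 0 1" "z \<in> ball 0 1"
  shows "(\<lambda>w. u w * deriv g w) contour_integrable_on linepath 0 z"
    and "(\<lambda>w. deriv u w * g w) contour_integrable_on linepath 0 z"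
  using assms holomorphic_g closed_segment_0_subset_ball[OF assms(2)]
  by (auto intro!: contour_integrable_holomorphic_simple[of _ "ball 0 1"] holomorphic_intros
           holomorphic_deriv)

lemma Top_sum:
  assumes "finite A" "\<And>i. i \<in> A \<Longrightarrow> u i holomorphic_on ball 0 1" "z \<in> ball 0 1"
  shows "Top g (\<lambda>w. \<Sum>i\<in>A. k i * u i w) z = (\<Sum>i\<in>A. k i * Top g (u i) z)"
proof -
  have "Top g (\<lambda>w. \<Sum>i\<in>A. k i * u i w) z =
      contour_integral (linepath 0 z) (\<lambda>w. \<Sum>i\<in>A. k i * (u i w * deriv g w))"
    by (simp add: Top_def sum_distrib_right mult.assoc)
  then show ?thesis
    using assms contour_integrable_Top_Sop_integrands(1)
    by (simp add: contour_integral_linear_combination Top_def)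
qed

lemma Sop_sum:
  assumes "finite A" "\<And>i. i \<in> A \<Longrightarrow> u i holomorphic_on ball 0 1" "z \<in> ball 0 1"
  shows "Sop g (\<lambda>w. \<Sum>i\<in>A. k i * u i w) z = (\<Sum>i\<in>A. k i * Sop g (u i) z)"
proof -
  have "deriv (\<lambda>w. \<Sum>i\<in>A. k i * u i w) w = (\<Sum>i\<in>A. k i * deriv (u i) w)" if "w \<in> ball 0 1" for w
    using assms that
    by (intro DERIV_imp_deriv)
       (auto intro!: derivative_eq_intros holomorphic_derivI[of _ "ball 0 1"] simp: mult.commute)
  then have "Sop g (\<lambda>w. \<Sum>i\<in>A. k i * u i w) z =
      contour_integral (linepath 0 z) (\<lambda>w. \<Sum>i\<in>A. k i * (deriv (u i) w * g w))"
    unfolding Sop_def using closed_segment_0_subset_ball[OF assms(3)]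
    by (intro contour_integral_eq) (auto simp: sum_distrib_right mult.assoc)
  then show ?thesis
    using assms contour_integrable_Top_Sop_integrands(2)
    by (simp add: contour_integral_linear_combination Sop_def)
qed

lemma Top_add_cmult:
  assumes "u holomorphic_on ball 0 1" "v holomorphic_on ball 0 1" "z \<in> ball 0 1"
  shows "Top g (\<lambda>w. u w + k * v w) z = Top g u z + k * Top g v z"
  using Top_sum[of "{True, False}" "\<lambda>b. if b then u else v" z "\<lambda>b. if b then 1 else k"] assms
  by simp

lemma Sop_add_cmult:
  assumes "u holomorphic_on ball 0 1" "v holomorphic_on ball 0 1" "z \<in> ball 0 1"
  shows "Sop g (\<lambda>w. u w + k * v w) z = Sop g u z + k * Sop g v z"
  using Sop_sum[of "{True, False}" "\<lambda>b. if b then u else v" z "\<lambda>b. if b then 1 else k"] assms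
  by simp

lemma Mop_eq_Sop_Top:
  assumes u: "u holomorphic_on ball 0 1" and z: "z \<in> ball 0 1"
  shows "Mop g u z = Sop g u z + Top g u z + g 0 * u 0"
proof -
  have "((\<lambda>w. u w * g w) has_field_derivative deriv u w * g w + u w * deriv g w) (at w)"
    if "w \<in> ball 0 1" for w
    using u holomorphic_g that by (auto intro!: derivative_eq_intros holomorphic_derivI[of _ "ball 0 1"])
  moreover have "((\<lambda>w. Sop g u w + Top g u w + g 0 * u 0) has_field_derivative
      deriv u w * g w + u w * deriv g w) (at w)" if "w \<in> ball 0 1" for w
    using u that by (auto intro!: derivative_eq_intros has_field_derivative_Sop has_field_derivative_Top)
  ultimately show ?thesis
    unfolding Mop_def
    by (rule eq_on_convex_if_same_derivative[where S = "ball 0 1" and a = 0]) (use z in auto)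
qed

text \<open>Both sides have derivative \<open>g' \<cdot> S\<^sub>g v\<close>: by the product rule,
  \<open>(S\<^sub>g T\<^sub>g v - T\<^sub>g\<^sup>2 v)' = g' (g v - T\<^sub>g v) = g' (S\<^sub>g v + g(0) v(0))\<close>.\<close>
lemma Top_Sop:
  assumes v: "v holomorphic_on ball 0 1" and z: "z \<in> ball 0 1"
  shows "Top g (Sop g v) z = Sop g (Top g v) z - Top g (Top g v) z - g 0 * v 0 * (g z - g 0)"
proof -
  have "(Top g (Sop g v) has_field_derivative Sop g v w * deriv g w) (at w)" if "w \<in> ball 0 1" for w
    using v that by (intro has_field_derivative_Top holomorphic_Sop)
  moreover have "((\<lambda>w. Sop g (Top g v) w - Top g (Top g v) w - g 0 * v 0 * (g w - g 0))
      has_field_derivative Sop g v w * deriv g w) (at w)" if w: "w \<in> ball 0 1" for w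
  proof -
    have "deriv (Top g v) w = v w * deriv g w"
      using has_field_derivative_Top[OF v w] by (rule DERIV_imp_deriv)
    then have "((\<lambda>w. Sop g (Top g v) w - Top g (Top g v) w - g 0 * v 0 * (g w - g 0))
        has_field_derivative v w * deriv g w * g w - Top g v w * deriv g w - g 0 * v 0 * deriv g w) (at w)"
      using v w holomorphic_g
      by (auto intro!: derivative_eq_intros has_field_derivative_Sop has_field_derivative_Top
          holomorphic_Top holomorphic_derivI[of _ "ball 0 1"])
    moreover have "v w * deriv g w * g w - Top g v w * deriv g w - g 0 * v 0 * deriv g w =
        (v w * g w - Top g v w - g 0 * v 0) * deriv g w"
      by (simp add: algebra_simps)
    moreover have "v w * g w - Top g v w - g 0 * v 0 = Sop g v w"
      using Mop_eq_Sop_Top[OF v w] by (simp add: Mop_def)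
    ultimately show ?thesis
      by simp
  qed
  ultimately show ?thesis
    by (rule eq_on_convex_if_same_derivative[where S = "ball 0 1" and a = 0]) (use z in auto)
qed

lemma Top_power_g:
  assumes "z \<in> ball 0 1"
  shows "Top g (\<lambda>w. (g w - g 0) ^ r) z = (g z - g 0) ^ Suc r / of_nat (Suc r)"
proof -
  have "(Top g (\<lambda>w. (g w - g 0) ^ r) has_field_derivative (g w - g 0) ^ r * deriv g w) (at w)"
    if "w \<in> ball 0 1" for w
    using that holomorphic_g by (intro has_field_derivative_Top holomorphic_intros)
  moreover have "((\<lambda>w. (g w - g 0) ^ Suc r / of_nat (Suc r)) has_field_derivative
      (g w - g 0) ^ r * deriv g w) (at w)" if "w \<in> ball 0 1" for w
    using that holomorphic_g
    by (auto intro!: derivative_eq_intros holomorphic_derivI[of _ "ball 0 1"] simp del: of_nat_Suc power_Suc)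
  ultimately show ?thesis
    by (rule eq_on_convex_if_same_derivative[where S = "ball 0 1" and a = 0]) (use assms in auto)
qed

end

section \<open>Polynomials in \<open>g - g(0)\<close> and homogeneous operators\<close>

definition gpoly :: "(complex \<Rightarrow> complex) \<Rightarrow> nat \<Rightarrow> (nat \<Rightarrow> complex) \<Rightarrow> complex \<Rightarrow> complex" where
  "gpoly g m p = (\<lambda>z. \<Sum>r<m. p r * (g z - g 0) ^ r)"

definition is_gpoly :: "(complex \<Rightarrow> complex) \<Rightarrow> nat \<Rightarrow> (complex \<Rightarrow> complex) \<Rightarrow> bool" where
  "is_gpoly g m h \<longleftrightarrow> (\<exists>p. \<forall>z\<in>ball 0 1. h z = gpoly g m p z)"

lemma holomorphic_gpoly: "g holomorphic_on S \<Longrightarrow> gpoly g m p holomorphic_on S"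
  unfolding gpoly_def by (intro holomorphic_intros)

lemma gpoly_at_0: "gpoly g m p 0 = (if m = 0 then 0 else p 0)"
  by (cases m) (simp_all add: gpoly_def lessThan_Suc_eq_insert_0 sum.reindex)

lemma is_gpoly_gpoly: "is_gpoly g m (gpoly g m p)"
  unfolding is_gpoly_def by auto

lemma is_gpoly_cong: "is_gpoly g m h \<Longrightarrow> (\<And>z. z \<in> ball 0 1 \<Longrightarrow> h' z = h z) \<Longrightarrow> is_gpoly g m h'"
  unfolding is_gpoly_def by auto

lemma is_gpoly_mono:
  assumes "is_gpoly g m h" "m \<le> m'"
  shows "is_gpoly g m' h"
proof -
  obtain p where p: "\<forall>z\<in>ball 0 1. h z = gpoly g m p z"
    using assms(1) by (auto simp: is_gpoly_def)
  have "gpoly g m' (\<lambda>r. if r < m then p r else 0) z = gpoly g m p z" for z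
    unfolding gpoly_def using assms(2) by (intro sum.mono_neutral_cong_right) auto
  then show ?thesis
    using p unfolding is_gpoly_def by metis
qed

lemma is_gpoly_add:
  assumes "is_gpoly g m h1" "is_gpoly g m h2"
  shows "is_gpoly g m (\<lambda>z. h1 z + k * h2 z)"
proof -
  obtain p1 p2 where "\<forall>z\<in>ball 0 1. h1 z = gpoly g m p1 z" "\<forall>z\<in>ball 0 1. h2 z = gpoly g m p2 z"
    using assms by (auto simp: is_gpoly_def)
  moreover have "gpoly g m (\<lambda>r. p1 r + k * p2 r) z = gpoly g m p1 z + k * gpoly g m p2 z" for z
    by (simp add: gpoly_def sum.distrib sum_distrib_left algebra_simps)
  ultimately show ?thesis
    unfolding is_gpoly_def by (intro exI[of _ "\<lambda>r. p1 r + k * p2 r"]) auto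
qed

lemma is_gpoly_const: "is_gpoly g (Suc m) (\<lambda>z. K)"
  unfolding is_gpoly_def gpoly_def
  by (intro exI[of _ "\<lambda>r. if r = 0 then K else 0"]) (simp add: sum.lessThan_Suc_shift del: sum.lessThan_Suc)

lemma is_gpoly_mult_g:
  assumes "is_gpoly g m h"
  shows "is_gpoly g (Suc m) (\<lambda>z. (g z - g 0) * h z)"
proof -
  obtain p where "\<forall>z\<in>ball 0 1. h z = gpoly g m p z"
    using assms by (auto simp: is_gpoly_def)
  moreover have "gpoly g (Suc m) (\<lambda>r. if r = 0 then 0 else p (r - 1)) z = (g z - g 0) * gpoly g m p z" for z
    by (simp add: gpoly_def sum.lessThan_Suc_shift sum_distrib_left algebra_simps del: sum.lessThan_Suc)
  ultimately show ?thesis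
    unfolding is_gpoly_def by (intro exI[of _ "\<lambda>r. if r = 0 then 0 else p (r - 1)"]) auto
qed

definition st_sum :: "(complex \<Rightarrow> complex) \<Rightarrow> nat \<Rightarrow> (nat \<Rightarrow> complex) \<Rightarrow> (complex \<Rightarrow> complex)
    \<Rightarrow> complex \<Rightarrow> complex" where
  "st_sum g m c u = (\<lambda>z. \<Sum>j = 0..m. c j * (Sop g ^^ j) ((Top g ^^ (m - j)) u) z)"

lemma st_sum_linear:
  "st_sum g m (\<lambda>j. c1 j + k * c2 j) u z = st_sum g m c1 u z + k * st_sum g m c2 u z"
  by (simp add: st_sum_def sum.distrib sum_distrib_left algebra_simps)

lemma st_sum_at_0: "st_sum g m c u 0 = (if m = 0 then c 0 * u 0 else 0)"
  by (cases m) (auto simp: st_sum_def Sop_Top_iterate_at_0 intro!: sum.neutral)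

text \<open>The bound \<open>b\<close> on the number of factors \<open>S\<^sub>g\<close> is what makes the induction in
  \<open>st_homogeneous_Top_Sop_Top\<close> well founded.\<close>
definition st_homogeneous :: "(complex \<Rightarrow> complex) \<Rightarrow> nat \<Rightarrow> nat
    \<Rightarrow> ((complex \<Rightarrow> complex) \<Rightarrow> complex \<Rightarrow> complex) \<Rightarrow> bool" where
  "st_homogeneous g m b F \<longleftrightarrow> (\<exists>c p. (\<forall>j>b. c j = 0) \<and> (\<forall>u. u holomorphic_on ball 0 1 \<longrightarrow>
      (\<forall>z\<in>ball 0 1. F u z = st_sum g m c u z + g 0 * gpoly g m p z * u 0)))"

lemma st_homogeneous_cong:
  "st_homogeneous g m b F' \<Longrightarrow>
   (\<And>u z. u holomorphic_on ball 0 1 \<Longrightarrow> z \<in> ball 0 1 \<Longrightarrow> F u z = F' u z) \<Longrightarrow>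
   st_homogeneous g m b F"
  unfolding st_homogeneous_def by metis

lemma st_homogeneous_mono: "st_homogeneous g m b F \<Longrightarrow> b \<le> b' \<Longrightarrow> st_homogeneous g m b' F"
  unfolding st_homogeneous_def by (meson le_less_trans)

lemma st_homogeneous_zero: "st_homogeneous g m b (\<lambda>u z. 0)"
  unfolding st_homogeneous_def
  by (rule exI[of _ "\<lambda>j. 0"], rule exI[of _ "\<lambda>j. 0"]) (simp add: st_sum_def gpoly_def)

lemma st_homogeneous_add:
  assumes "st_homogeneous g m b F1" "st_homogeneous g m b F2"
  shows "st_homogeneous g m b (\<lambda>u z. F1 u z + k * F2 u z)"
proof -
  obtain c1 p1 c2 p2 where
    c: "\<forall>j>b. c1 j = 0" "\<forall>j>b. c2 j = 0" and
    F: "\<forall>u. u holomorphic_on ball 0 1 \<longrightarrow> (\<forall>z\<in>ball 0 1. F1 u z = st_sum g m c1 u z + g 0 * gpoly g m p1 z * u 0)"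
       "\<forall>u. u holomorphic_on ball 0 1 \<longrightarrow> (\<forall>z\<in>ball 0 1. F2 u z = st_sum g m c2 u z + g 0 * gpoly g m p2 z * u 0)"
    using assms unfolding st_homogeneous_def by metis
  have "gpoly g m (\<lambda>j. p1 j + k * p2 j) z = gpoly g m p1 z + k * gpoly g m p2 z" for z
    by (simp add: gpoly_def sum.distrib sum_distrib_left algebra_simps)
  then show ?thesis
    unfolding st_homogeneous_def using c F
    by (intro exI[of _ "\<lambda>j. c1 j + k * c2 j"] exI[of _ "\<lambda>j. p1 j + k * p2 j"])
       (auto simp: st_sum_linear algebra_simps)
qed

lemma st_homogeneous_sum:
  "finite A \<Longrightarrow> (\<And>i. i \<in> A \<Longrightarrow> st_homogeneous g m b (F i)) \<Longrightarrow>
   st_homogeneous g m b (\<lambda>u z. \<Sum>i\<in>A. k i * F i u z)"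
proof (induction A rule: finite_induct)
  case empty
  then show ?case by (simp add: st_homogeneous_zero)
next
  case (insert x A)
  then have "st_homogeneous g m b (\<lambda>u z. (\<Sum>i\<in>A. k i * F i u z) + k x * F x u z)"
    by (intro st_homogeneous_add) auto
  then show ?case
    by (rule st_homogeneous_cong) (use insert in \<open>simp add: algebra_simps\<close>)
qed

lemma st_homogeneous_gpoly_delta: "is_gpoly g m h \<Longrightarrow> st_homogeneous g m b (\<lambda>u z. g 0 * h z * u 0)"
  unfolding st_homogeneous_def is_gpoly_def
  by (elim exE, rule exI[of _ "\<lambda>j. 0"], rule_tac exI) (auto simp: st_sum_def)

lemma st_homogeneous_Top_power: "st_homogeneous g m 0 (Top g ^^ m)"
  unfolding st_homogeneous_def
  by (rule exI[of _ "\<lambda>j. if j = 0 then 1 else 0"], rule exI[of _ "\<lambda>j. 0"])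
     (simp add: st_sum_def gpoly_def mult_delta_left sum.delta)

context disc_symbol
begin

lemma is_gpoly_Top:
  assumes "is_gpoly g m h"
  shows "is_gpoly g (Suc m) (Top g h)"
proof -
  obtain p where p: "\<forall>z\<in>ball 0 1. h z = gpoly g m p z"
    using assms by (auto simp: is_gpoly_def)
  have "is_gpoly g (Suc m) (\<lambda>z. (g z - g 0) * gpoly g m (\<lambda>r. p r / of_nat (Suc r)) z)"
    by (intro is_gpoly_mult_g is_gpoly_gpoly)
  then show ?thesis
  proof (rule is_gpoly_cong)
    fix z :: complex assume z: "z \<in> ball 0 1"
    have "Top g h z = Top g (\<lambda>w. \<Sum>r<m. p r * (g w - g 0) ^ r) z"
      using p z by (intro Top_cong) (auto simp: gpoly_def)
    also have "\<dots> = (\<Sum>r<m. p r * ((g z - g 0) ^ Suc r / of_nat (Suc r)))"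
      using z holomorphic_g
      by (simp add: Top_sum holomorphic_intros Top_power_g del: of_nat_Suc power_Suc)
    also have "\<dots> = (g z - g 0) * gpoly g m (\<lambda>r. p r / of_nat (Suc r)) z"
      by (simp add: gpoly_def sum_distrib_left algebra_simps del: of_nat_Suc)
    finally show "Top g h z = (g z - g 0) * gpoly g m (\<lambda>r. p r / of_nat (Suc r)) z" .
  qed
qed

lemma is_gpoly_Mop:
  assumes "is_gpoly g m h"
  shows "is_gpoly g (Suc m) (Mop g h)"
proof -
  have "is_gpoly g (Suc m) (\<lambda>z. (g z - g 0) * h z + g 0 * h z)"
    using assms by (intro is_gpoly_add is_gpoly_mult_g is_gpoly_mono[OF assms]) simp_all
  then show ?thesis
    by (rule is_gpoly_cong) (simp add: Mop_def algebra_simps)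
qed

lemma is_gpoly_Sop:
  assumes "is_gpoly g m h"
  shows "is_gpoly g (Suc m) (Sop g h)"
proof -
  obtain p where p: "\<forall>z\<in>ball 0 1. h z = gpoly g m p z"
    using assms by (auto simp: is_gpoly_def)
  let ?q = "gpoly g m p"
  have "is_gpoly g (Suc m) (\<lambda>z. Mop g ?q z + (-1) * Top g ?q z + (-1) * (g 0 * ?q 0))"
    by (intro is_gpoly_add is_gpoly_Mop is_gpoly_Top is_gpoly_gpoly is_gpoly_const)
  then show ?thesis
  proof (rule is_gpoly_cong)
    fix z :: complex assume z: "z \<in> ball 0 1"
    have "Sop g h z = Sop g ?q z"
      using p z by (intro Sop_cong) auto
    also have "\<dots> = Mop g ?q z + (-1) * Top g ?q z + (-1) * (g 0 * ?q 0)"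
      using Mop_eq_Sop_Top[OF holomorphic_gpoly[OF holomorphic_g] z, of m p] by simp
    finally show "Sop g h z = Mop g ?q z + (-1) * Top g ?q z + (-1) * (g 0 * ?q 0)" .
  qed
qed

lemma holomorphic_st_sum: "u holomorphic_on ball 0 1 \<Longrightarrow> st_sum g m c u holomorphic_on ball 0 1"
  unfolding st_sum_def by (intro holomorphic_intros holomorphic_Sop_Top_iterate)

lemma Sop_st_sum:
  assumes "u holomorphic_on ball 0 1" "z \<in> ball 0 1"
  shows "Sop g (st_sum g m c u) z = st_sum g (Suc m) (\<lambda>j. if j = 0 then 0 else c (j - 1)) u z"
proof -
  have "Sop g (st_sum g m c u) z = (\<Sum>j = 0..m. c j * Sop g ((Sop g ^^ j) ((Top g ^^ (m - j)) u)) z)"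
    unfolding st_sum_def using assms by (intro Sop_sum holomorphic_Sop_Top_iterate) auto
  also have "\<dots> = st_sum g (Suc m) (\<lambda>j. if j = 0 then 0 else c (j - 1)) u z"
    unfolding st_sum_def sum.atLeast0_atMost_Suc_shift by simp
  finally show ?thesis .
qed

lemma Top_st_sum:
  assumes "u holomorphic_on ball 0 1" "z \<in> ball 0 1"
  shows "Top g (st_sum g m c u) z = (\<Sum>j = 0..m. c j * Top g ((Sop g ^^ j) ((Top g ^^ (m - j)) u)) z)"
  unfolding st_sum_def using assms by (intro Top_sum holomorphic_Sop_Top_iterate) auto

lemma st_homogeneous_Sop:
  assumes "st_homogeneous g m b F"
  shows "st_homogeneous g (Suc m) (Suc b) (\<lambda>u. Sop g (F u))"
proof -
  obtain c p where c: "\<forall>j>b. c j = 0" and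
    F: "\<forall>u. u holomorphic_on ball 0 1 \<longrightarrow> (\<forall>z\<in>ball 0 1. F u z = st_sum g m c u z + g 0 * gpoly g m p z * u 0)"
    using assms unfolding st_homogeneous_def by metis
  obtain q where q: "\<forall>z\<in>ball 0 1. Sop g (gpoly g m p) z = gpoly g (Suc m) q z"
    using is_gpoly_Sop[OF is_gpoly_gpoly] unfolding is_gpoly_def by blast
  show ?thesis
    unfolding st_homogeneous_def
  proof (intro exI conjI allI impI ballI)
    fix j :: nat assume "Suc b < j"
    then show "(if j = 0 then 0 else c (j - 1)) = 0"
      using c by auto
  next
    fix u and z :: complex assume u: "u holomorphic_on ball 0 1" and z: "z \<in> ball 0 1"
    have "Sop g (F u) z = Sop g (\<lambda>w. st_sum g m c u w + (g 0 * u 0) * gpoly g m p w) z"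
      using F u z by (intro Sop_cong) (auto simp: algebra_simps)
    also have "\<dots> = Sop g (st_sum g m c u) z + (g 0 * u 0) * Sop g (gpoly g m p) z"
      using u z holomorphic_g by (intro Sop_add_cmult holomorphic_st_sum holomorphic_gpoly)
    also have "\<dots> = st_sum g (Suc m) (\<lambda>j. if j = 0 then 0 else c (j - 1)) u z
        + g 0 * gpoly g (Suc m) q z * u 0"
      using q u z by (simp add: Sop_st_sum)
    finally show "Sop g (F u) z = st_sum g (Suc m) (\<lambda>j. if j = 0 then 0 else c (j - 1)) u z
        + g 0 * gpoly g (Suc m) q z * u 0" .
  qed
qed

lemma st_homogeneous_Top_by_monomials:
  assumes "st_homogeneous g m b F"
    and "\<And>j. j \<le> b \<Longrightarrow> j \<le> m \<Longrightarrow>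
      st_homogeneous g (Suc m) b' (\<lambda>u. Top g ((Sop g ^^ j) ((Top g ^^ (m - j)) u)))"
  shows "st_homogeneous g (Suc m) b' (\<lambda>u. Top g (F u))"
proof -
  obtain c p where c: "\<forall>j>b. c j = 0" and
    F: "\<forall>u. u holomorphic_on ball 0 1 \<longrightarrow> (\<forall>z\<in>ball 0 1. F u z = st_sum g m c u z + g 0 * gpoly g m p z * u 0)"
    using assms(1) unfolding st_homogeneous_def by metis
  define Top_monomial where "Top_monomial j = (if j \<le> b then (\<lambda>u. Top g ((Sop g ^^ j) ((Top g ^^ (m - j)) u)))
    else (\<lambda>u z. 0))" for j
  have "st_homogeneous g (Suc m) b'
      (\<lambda>u z. (\<Sum>j = 0..m. c j * Top_monomial j u z) + 1 * (g 0 * Top g (gpoly g m p) z * u 0))"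
    using assms(2)
    by (intro st_homogeneous_add st_homogeneous_sum st_homogeneous_gpoly_delta is_gpoly_Top is_gpoly_gpoly)
       (auto simp: Top_monomial_def st_homogeneous_zero)
  then show ?thesis
  proof (rule st_homogeneous_cong)
    fix u and z :: complex assume u: "u holomorphic_on ball 0 1" and z: "z \<in> ball 0 1"
    have "Top g (F u) z = Top g (\<lambda>w. st_sum g m c u w + (g 0 * u 0) * gpoly g m p w) z"
      using F u z by (intro Top_cong) (auto simp: algebra_simps)
    also have "\<dots> = Top g (st_sum g m c u) z + (g 0 * u 0) * Top g (gpoly g m p) z"
      using u z holomorphic_g by (intro Top_add_cmult holomorphic_st_sum holomorphic_gpoly)
    also have "Top g (st_sum g m c u) z = (\<Sum>j = 0..m. c j * Top_monomial j u z)"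
      unfolding Top_st_sum[OF u z] using c by (intro sum.cong refl) (auto simp: Top_monomial_def)
    finally show "Top g (F u) z = (\<Sum>j = 0..m. c j * Top_monomial j u z) + 1 * (g 0 * Top g (gpoly g m p) z * u 0)"
      by simp
  qed
qed

lemma st_homogeneous_Top_Sop:
  assumes holomorphic_V: "\<And>u. u holomorphic_on ball 0 1 \<Longrightarrow> V u holomorphic_on ball 0 1"
    and V_at_0: "\<And>u. V u 0 = K * u 0"
    and TV: "st_homogeneous g (Suc m) b (\<lambda>u. Top g (V u))"
    and monomials: "\<And>j. j \<le> b \<Longrightarrow> j \<le> Suc m \<Longrightarrow>
      st_homogeneous g (Suc (Suc m)) b (\<lambda>u. Top g ((Sop g ^^ j) ((Top g ^^ (Suc m - j)) u)))"
  shows "st_homogeneous g (Suc (Suc m)) (Suc b) (\<lambda>u. Top g (Sop g (V u)))"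
proof -
  have "st_homogeneous g (Suc (Suc m)) (Suc b) (\<lambda>u. Sop g (Top g (V u)))"
    by (rule st_homogeneous_Sop[OF TV])
  moreover have "st_homogeneous g (Suc (Suc m)) (Suc b) (\<lambda>u. Top g (Top g (V u)))"
    by (rule st_homogeneous_mono[OF st_homogeneous_Top_by_monomials[OF TV monomials]]) simp_all
  moreover have "st_homogeneous g (Suc (Suc m)) (Suc b) (\<lambda>u z. g 0 * ((g z - g 0) * K) * u 0)"
    by (intro st_homogeneous_gpoly_delta is_gpoly_mult_g is_gpoly_const)
  ultimately have "st_homogeneous g (Suc (Suc m)) (Suc b) (\<lambda>u z. (Sop g (Top g (V u)) z
      + (-1) * Top g (Top g (V u)) z) + (-1) * (g 0 * ((g z - g 0) * K) * u 0))"
    by (intro st_homogeneous_add)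
  then show ?thesis
  proof (rule st_homogeneous_cong)
    fix u and z :: complex assume "u holomorphic_on ball 0 1" "z \<in> ball 0 1"
    then have "Top g (Sop g (V u)) z =
        Sop g (Top g (V u)) z - Top g (Top g (V u)) z - g 0 * V u 0 * (g z - g 0)"
      by (intro Top_Sop holomorphic_V)
    then show "Top g (Sop g (V u)) z = (Sop g (Top g (V u)) z
        + (-1) * Top g (Top g (V u)) z) + (-1) * (g 0 * ((g z - g 0) * K) * u 0)"
      unfolding V_at_0 by (simp add: algebra_simps)
  qed
qed

text \<open>Induction on the number \<open>j\<close> of factors \<open>S\<^sub>g\<close>: the term \<open>T\<^sub>g\<^sup>2\<close> produced by
  \<open>Top_Sop\<close> only involves words with fewer factors \<open>S\<^sub>g\<close>.\<close>
lemma st_homogeneous_Top_Sop_Top: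
  "st_homogeneous g (Suc (j + i)) j (\<lambda>u. Top g ((Sop g ^^ j) ((Top g ^^ i) u)))"
proof (induction j arbitrary: i rule: less_induct)
  case (less j)
  show ?case
  proof (cases j)
    case 0
    then show ?thesis
      using st_homogeneous_Top_power[of g "Suc i"] by (simp add: comp_def)
  next
    case (Suc j')
    have "st_homogeneous g (Suc (Suc (j' + i))) (Suc j')
        (\<lambda>u. Top g (Sop g ((Sop g ^^ j') ((Top g ^^ i) u))))"
    proof (rule st_homogeneous_Top_Sop)
      show "(Sop g ^^ j') ((Top g ^^ i) u) 0 = (if j' = 0 \<and> i = 0 then 1 else 0) * u 0" for u
        by (simp add: Sop_Top_iterate_at_0)
      show "st_homogeneous g (Suc (j' + i)) j' (\<lambda>u. Top g ((Sop g ^^ j') ((Top g ^^ i) u)))"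
        using less Suc by simp
      fix k assume k: "k \<le> j'" "k \<le> Suc (j' + i)"
      then have "st_homogeneous g (Suc (Suc (j' + i))) k
          (\<lambda>u. Top g ((Sop g ^^ k) ((Top g ^^ (Suc (j' + i) - k)) u)))"
        using less.IH[of k "Suc (j' + i) - k"] Suc by simp
      then show "st_homogeneous g (Suc (Suc (j' + i))) j'
          (\<lambda>u. Top g ((Sop g ^^ k) ((Top g ^^ (Suc (j' + i) - k)) u)))"
        using k(1) by (rule st_homogeneous_mono)
    qed (rule holomorphic_Sop_Top_iterate)
    then show ?thesis
      using Suc by simp
  qed
qed

lemma st_homogeneous_Top:
  assumes "st_homogeneous g m m F"
  shows "st_homogeneous g (Suc m) (Suc m) (\<lambda>u. Top g (F u))"
proof (rule st_homogeneous_Top_by_monomials[OF assms])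
  fix j assume "j \<le> m"
  then show "st_homogeneous g (Suc m) (Suc m) (\<lambda>u. Top g ((Sop g ^^ j) ((Top g ^^ (m - j)) u)))"
    using st_homogeneous_Top_Sop_Top[of j "m - j"] by (auto intro: st_homogeneous_mono)
qed

lemma st_homogeneous_Mop:
  assumes "st_homogeneous g m m F"
  shows "st_homogeneous g (Suc m) (Suc m) (\<lambda>u. Mop g (F u))"
proof -
  obtain c p where
    F: "\<forall>u. u holomorphic_on ball 0 1 \<longrightarrow> (\<forall>z\<in>ball 0 1. F u z = st_sum g m c u z + g 0 * gpoly g m p z * u 0)"
    using assms unfolding st_homogeneous_def by metis
  define K where "K = (if m = 0 then c 0 else g 0 * p 0)"
  have "st_homogeneous g (Suc m) (Suc m) (\<lambda>u z. (Sop g (F u) z + 1 * Top g (F u) z) + 1 * (g 0 * K * u 0))"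
    using st_homogeneous_gpoly_delta[OF is_gpoly_const]
    by (intro st_homogeneous_add st_homogeneous_Sop st_homogeneous_Top assms)
  then show ?thesis
  proof (rule st_homogeneous_cong)
    fix u and z :: complex assume u: "u holomorphic_on ball 0 1" and z: "z \<in> ball 0 1"
    define X where "X w = st_sum g m c u w + g 0 * gpoly g m p w * u 0" for w
    have X: "\<And>w. w \<in> ball 0 1 \<Longrightarrow> F u w = X w"
      using F u by (simp add: X_def)
    have "X holomorphic_on ball 0 1"
      unfolding X_def using u holomorphic_g by (intro holomorphic_intros holomorphic_st_sum holomorphic_gpoly)
    moreover have "X 0 = K * u 0"
      by (simp add: X_def st_sum_at_0 gpoly_at_0 K_def)
    ultimately have "Mop g X z = Sop g X z + Top g X z + g 0 * K * u 0"
      using Mop_eq_Sop_Top[OF _ z] by (simp add: mult.assoc)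
    moreover have "Mop g (F u) z = Mop g X z"
      using X z by (simp add: Mop_def)
    moreover have "Sop g (F u) z = Sop g X z" "Top g (F u) z = Top g X z"
      using X z by (auto intro: Sop_cong Top_cong)
    ultimately show "Mop g (F u) z = (Sop g (F u) z + 1 * Top g (F u) z) + 1 * (g 0 * K * u 0)"
      by simp
  qed
qed

lemma st_homogeneous_word_op: "st_homogeneous g (length w) (length w) (word_op g w)"
proof (induction w)
  case Nil
  then show ?case
    using st_homogeneous_Top_power[of g 0] by (simp add: id_def)
next
  case (Cons l w)
  then show ?case
    using st_homogeneous_Mop st_homogeneous_Sop st_homogeneous_Top
    by (cases l) (simp_all add: comp_def)
qed

end

section \<open>Sums of homogeneous operators\<close>

definition st_decomposable :: "(complex \<Rightarrow> complex) \<Rightarrow> nat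
    \<Rightarrow> ((complex \<Rightarrow> complex) \<Rightarrow> complex \<Rightarrow> complex) \<Rightarrow> bool" where
  "st_decomposable g n F \<longleftrightarrow> (\<exists>(c :: nat \<Rightarrow> nat \<Rightarrow> complex) (P :: complex poly).
     (P = 0 \<or> degree P < n) \<and> (\<forall>u. u holomorphic_on ball 0 1 \<longrightarrow> (\<forall>z\<in>ball 0 1.
        F u z = (\<Sum>k = 1..n. st_sum g k (c k) u z) + g 0 * poly P (g z - g 0) * u 0)))"

lemma st_decomposable_zero: "st_decomposable g n (\<lambda>u z. 0)"
  unfolding st_decomposable_def
  by (rule exI[of _ "\<lambda>k j. 0"], rule exI[of _ 0]) (simp add: st_sum_def)

lemma st_decomposable_add:
  assumes "st_decomposable g n F1" "st_decomposable g n F2"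
  shows "st_decomposable g n (\<lambda>u z. F1 u z + a * F2 u z)"
proof -
  obtain c1 P1 where deg1: "P1 = 0 \<or> degree P1 < n" and
    F1: "\<forall>u. u holomorphic_on ball 0 1 \<longrightarrow> (\<forall>z\<in>ball 0 1.
          F1 u z = (\<Sum>k = 1..n. st_sum g k (c1 k) u z) + g 0 * poly P1 (g z - g 0) * u 0)"
    using assms(1) unfolding st_decomposable_def by blast
  obtain c2 P2 where deg2: "P2 = 0 \<or> degree P2 < n" and
    F2: "\<forall>u. u holomorphic_on ball 0 1 \<longrightarrow> (\<forall>z\<in>ball 0 1.
          F2 u z = (\<Sum>k = 1..n. st_sum g k (c2 k) u z) + g 0 * poly P2 (g z - g 0) * u 0)"
    using assms(2) unfolding st_decomposable_def by blast
  have sums: "(\<Sum>k = 1..n. st_sum g k (\<lambda>j. c1 k j + a * c2 k j) u z) =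
      (\<Sum>k = 1..n. st_sum g k (c1 k) u z) + a * (\<Sum>k = 1..n. st_sum g k (c2 k) u z)" for u z
    by (simp add: st_sum_linear sum.distrib sum_distrib_left)
  show ?thesis
    unfolding st_decomposable_def
  proof (intro exI conjI allI impI ballI)
    show "P1 + smult a P2 = 0 \<or> degree (P1 + smult a P2) < n"
    proof (cases "n = 0")
      case False
      then have "degree P1 < n" "degree P2 < n"
        using deg1 deg2 by auto
      then show ?thesis
        using degree_add_le_max[of P1 "smult a P2"] degree_smult_le[of a P2] by linarith
    qed (use deg1 deg2 in simp)
  next
    fix u z assume "u holomorphic_on ball 0 1" "(z :: complex) \<in> ball 0 1"
    then have "F1 u z = (\<Sum>k = 1..n. st_sum g k (c1 k) u z) + g 0 * poly P1 (g z - g 0) * u 0"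
      "F2 u z = (\<Sum>k = 1..n. st_sum g k (c2 k) u z) + g 0 * poly P2 (g z - g 0) * u 0"
      using F1 F2 by blast+
    then show "F1 u z + a * F2 u z = (\<Sum>k = 1..n. st_sum g k (\<lambda>j. c1 k j + a * c2 k j) u z)
        + g 0 * poly (P1 + smult a P2) (g z - g 0) * u 0"
      unfolding sums by (simp add: algebra_simps)
  qed
qed

lemma st_decomposable_sum:
  "finite A \<Longrightarrow> (\<And>i. i \<in> A \<Longrightarrow> st_decomposable g n (F i)) \<Longrightarrow>
   st_decomposable g n (\<lambda>u z. \<Sum>i\<in>A. a i * F i u z)"
proof (induction A rule: finite_induct)
  case empty
  then show ?case by (simp add: st_decomposable_zero)
next
  case (insert x A)
  then have "st_decomposable g n (\<lambda>u z. (\<Sum>i\<in>A. a i * F i u z) + a x * F x u z)"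
    by (intro st_decomposable_add) auto
  then show ?case
    using insert by (simp add: algebra_simps)
qed

lemma st_decomposable_if_homogeneous:
  assumes "st_homogeneous g m b F" "1 \<le> m" "m \<le> n"
  shows "st_decomposable g n F"
proof -
  obtain c p where
    F: "\<forall>u. u holomorphic_on ball 0 1 \<longrightarrow> (\<forall>z\<in>ball 0 1. F u z = st_sum g m c u z + g 0 * gpoly g m p z * u 0)"
    using assms(1) unfolding st_homogeneous_def by metis
  define P where "P = (\<Sum>r<m. monom (p r) r)"
  have "degree P \<le> m - 1"
    unfolding P_def by (rule degree_sum_le) (auto intro: order.trans[OF degree_monom_le])
  then have "degree P < n"
    using assms(2,3) by linarith
  moreover have "poly P (g z - g 0) = gpoly g m p z" for z
    by (simp add: P_def gpoly_def poly_sum poly_monom)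
  moreover have "(\<Sum>k = 1..n. st_sum g k (if k = m then c else (\<lambda>j. 0)) u z) = st_sum g m c u z" for u z
  proof -
    have "(\<Sum>k = 1..n. st_sum g k (if k = m then c else (\<lambda>j. 0)) u z) =
        (\<Sum>k = 1..n. if k = m then st_sum g m c u z else 0)"
      by (intro sum.cong) (auto simp: st_sum_def)
    then show ?thesis
      using assms(2,3) by simp
  qed
  ultimately show ?thesis
    unfolding st_decomposable_def using F
    by (intro exI[of _ "\<lambda>k. if k = m then c else (\<lambda>j. 0)"] exI[of _ P]) auto
qed

lemma finite_words_upto: "finite (words_upto n)"
proof -
  have "(UNIV :: letter set) = {LM, LS, LT}"
    by (auto intro: letter.exhaust)
  then have "finite (UNIV :: letter set)"
    by (metis finite.emptyI finite_insert)
  then have "finite {w. set w \<subseteq> (UNIV :: letter set) \<and> length w \<le> n}"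
    by (intro finite_lists_length_le)
  then show ?thesis
    unfolding words_upto_def by (rule finite_subset[rotated]) auto
qed

theorem proposition3p6:
  fixes g :: "complex \<Rightarrow> complex" and n :: nat and a :: "letter list \<Rightarrow> complex"
  assumes "g holomorphic_on ball 0 1"
  shows "\<exists>(c :: nat \<Rightarrow> nat \<Rightarrow> complex) (P :: complex poly).
           (P = 0 \<or> degree P < n) \<and>
           (\<forall>f. f holomorphic_on ball 0 1 \<longrightarrow>
              (\<forall>z \<in> ball 0 1.
                 span_op g n a f z =
                   (\<Sum>k = 1..n. \<Sum>j = 0..k. c j k * ((Sop g ^^ j) ((Top g ^^ (k - j)) f)) z)
                   + g 0 * poly P (g z - g 0) * f 0))"
proof -
  have "st_decomposable g n (\<lambda>u z. \<Sum>w\<in>words_upto n. a w * word_op g w u z)"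
  proof (rule st_decomposable_sum[OF finite_words_upto])
    fix w assume "w \<in> words_upto n"
    then show "st_decomposable g n (word_op g w)"
      using disc_symbol.st_homogeneous_word_op[OF disc_symbol.intro[OF assms], of w]
      by (intro st_decomposable_if_homogeneous) (auto simp: words_upto_def)
  qed
  then obtain c P where "P = 0 \<or> degree P < n" and
    "\<forall>f. f holomorphic_on ball 0 1 \<longrightarrow> (\<forall>z\<in>ball 0 1. span_op g n a f z =
       (\<Sum>k = 1..n. st_sum g k (c k) f z) + g 0 * poly P (g z - g 0) * f 0)"
    unfolding st_decomposable_def span_op_def by blast
  then show ?thesis
    by (intro exI[of _ "\<lambda>j k. c k j"] exI[of _ P]) (simp add: st_sum_def)
qed

end
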